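(* Let $n\ge2$, $1\le m\le n-1$, and let $G$ satisfy $\mathrm{PSL}_n(q)\trianglelefteq G\le\mathrm{PGL}_n(q)$, acting on the set $\Omega$ of all $m$-dimensional subspaces of $V=\mathbb{F}_q^n$, with $t=|\Omega|$. Then $\mathrm{H}(G)<4\log t$ and $\mathrm{H}(G)<2\min(m,n-m)\,n$.
   Context: Logarithms are to base $2$. $\mathrm{H}(G)$ is the height: the maximum size of a subset $\Lambda\subseteq\Omega$ whose pointwise stabilizer $G_{(\Lambda)}$ differs from $G_{(\Lambda')}$ for every proper subset $\Lambda'\subsetneq\Lambda$. *)

theory Defs
  imports "HOL-Analysis.Analysis"
begin

text \<open>V = F_q^n is rendered as the type 'k^'n with 'k a finite field (q = CARD('k))
  and n = CARD('n).\<close>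

definition subspaces_of_dim :: "nat \<Rightarrow> ('k::field ^ 'n) set set" where
  "subspaces_of_dim m = {W. vec.subspace W \<and> vec.dim W = m}"

definition induced_perm :: "nat \<Rightarrow> 'k::field ^ 'n ^ 'n \<Rightarrow> ('k ^ 'n) set \<Rightarrow> ('k ^ 'n) set" where
  "induced_perm m A = (\<lambda>W. if W \<in> subspaces_of_dim m then (\<lambda>v. A *v v) ` W else W)"

text \<open>PGL_n(q) and PSL_n(q) as permutation groups on Omega: images of GL_n(q) and SL_n(q)
  (scalars act trivially, so these are the images of PGL and PSL).\<close>
definition PGL_perms :: "nat \<Rightarrow> (('k::field ^ 'n) set \<Rightarrow> ('k ^ 'n) set) set" where
  "PGL_perms m = induced_perm m ` {A :: 'k ^ 'n ^ 'n. invertible A}"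

definition PSL_perms :: "nat \<Rightarrow> (('k::field ^ 'n) set \<Rightarrow> ('k ^ 'n) set) set" where
  "PSL_perms m = induced_perm m ` {A :: 'k ^ 'n ^ 'n. det A = 1}"

definition pointwise_stab :: "('a \<Rightarrow> 'a) set \<Rightarrow> 'a set \<Rightarrow> ('a \<Rightarrow> 'a) set" where
  "pointwise_stab G L = {g \<in> G. \<forall>x\<in>L. g x = x}"

definition height_independent :: "('a \<Rightarrow> 'a) set \<Rightarrow> 'a set \<Rightarrow> bool" where
  "height_independent G L \<longleftrightarrow> (\<forall>L'. L' \<subset> L \<longrightarrow> pointwise_stab G L \<noteq> pointwise_stab G L')"

definition height :: "('a \<Rightarrow> 'a) set \<Rightarrow> 'a set \<Rightarrow> nat" where
  "height G Om = Max (card ` {L. L \<subseteq> Om \<and> height_independent G L})"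

end

theory Submission
  imports Defs
begin

text \<open>
  For a family F of subspaces let E(F) be the space of n \<times> n matrices leaving every member of F
  invariant. If L \<subseteq> \<Omega> is independent for G \<le> PGL_n(q), then E strictly shrinks whenever a member
  of L is added to a subfamily: otherwise every element of G fixing L - {W} pointwise would also
  fix W. Elementary matrices measure the loss more precisely. If adding W enlarges the span of
  the family by \<delta>, then E loses at least (n - m)\<delta> dimensions; if it cuts the intersection by \<delta>,
  E loses at least m\<delta>. The two resulting potentials give |L| + 1 \<le> (m + 1)n and
  |L| + 1 \<le> (n - m + 1)n, so H(G) < 2 min(m, n - m) n \<le> 4m(n - m). Finally
  t \<ge> 2^(m(n - m)), witnessed by the row spaces of reduced echelon matrices with 0/1 entries.
  Only G \<le> PGL_n(q) is used.
\<close>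

text \<open>
  Matrices are flattened to 'k ^ ('n \<times> 'n): unlike 'k ^ 'n ^ 'n, this is a 'k-vector space
  for \<open>vec\<close>, so spaces of matrices have a dimension.
\<close>

type_synonym ('k, 'n) fmat = "'k ^ ('n \<times> 'n)"

definition fmat_apply :: "('k::field, 'n) fmat \<Rightarrow> 'k ^ 'n \<Rightarrow> 'k ^ 'n" where
  "fmat_apply A x = (\<chi> i. \<Sum>j\<in>UNIV. A $ (i, j) * x $ j)"

definition fmat_of :: "'k::field ^ 'n ^ 'n \<Rightarrow> ('k, 'n) fmat" where
  "fmat_of M = (\<chi> p. M $ fst p $ snd p)"

lemma fmat_apply_fmat_of [simp]: "fmat_apply (fmat_of M) x = M *v x"
  by (simp add: fmat_apply_def fmat_of_def matrix_vector_mult_def)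

lemma linear_fmat_apply: "Vector_Spaces.linear (*s) (*s) (fmat_apply A)"
proof -
  have "fmat_apply A = (*v) (\<chi> i j. A $ (i, j))"
    by (simp add: fun_eq_iff fmat_apply_def matrix_vector_mult_def)
  then show ?thesis by simp
qed

lemma fmat_apply_add [simp]: "fmat_apply (A + B) x = fmat_apply A x + fmat_apply B x"
  by (simp add: fmat_apply_def vec_eq_iff algebra_simps sum.distrib)

lemma fmat_apply_scale [simp]: "fmat_apply (c *s A) x = c *s fmat_apply A x"
  by (simp add: fmat_apply_def vec_eq_iff sum_distrib_left mult.assoc)

lemma fmat_apply_zero [simp]: "fmat_apply 0 x = 0"
  by (simp add: fmat_apply_def vec_eq_iff)

lemma fmat_apply_sum: "fmat_apply (sum f S) x = (\<Sum>s\<in>S. fmat_apply (f s) x)"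
  by (induction S rule: infinite_finite_induct) simp_all

definition invariant_fmats :: "('k::field ^ 'n) set set \<Rightarrow> ('k, 'n) fmat set" where
  "invariant_fmats F = {A. \<forall>W\<in>F. \<forall>x\<in>W. fmat_apply A x \<in> W}"

lemma invariant_fmats_empty [simp]: "invariant_fmats {} = UNIV"
  by (simp add: invariant_fmats_def)

lemma invariant_fmats_insert: "invariant_fmats (insert W F) = invariant_fmats F \<inter> invariant_fmats {W}"
  unfolding invariant_fmats_def by auto

lemma subspace_invariant_fmats:
  assumes "\<And>W. W \<in> F \<Longrightarrow> vec.subspace W"
  shows "vec.subspace (invariant_fmats F)"
  using assms unfolding vec.subspace_def invariant_fmats_def by auto

lemma subspace_dim_less:
  assumes "vec.subspace S" "vec.subspace T" "S \<subset> T"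
  shows "vec.dim (S :: ('k::field ^ 'm) set) < vec.dim T"
  using assms by (metis vec.dim_psubset vec.span_eq_iff)

lemma dim_le_CARD: "vec.dim (S :: ('k::field ^ 'n) set) \<le> CARD('n)"
  using vec.dim_subset[of S UNIV] by (simp add: card_cart_basis)

definition independent_modulo :: "('k::field ^ 'm) set \<Rightarrow> ('i \<Rightarrow> 'k ^ 'm) \<Rightarrow> 'i set \<Rightarrow> bool" where
  "independent_modulo Z e I \<longleftrightarrow> (\<forall>c. (\<Sum>i\<in>I. c i *s e i) \<in> Z \<longrightarrow> (\<forall>i\<in>I. c i = 0))"

lemma independent_modulo_inj_on:
  fixes Z :: "('k::field ^ 'm) set"
  assumes ind: "independent_modulo Z e I" and "0 \<in> Z" "finite I"
  shows "inj_on e I"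
proof (rule inj_onI, rule ccontr)
  fix i j assume ij: "i \<in> I" "j \<in> I" "e i = e j" "i \<noteq> j"
  define c where "c k = (if k = i then 1 else if k = j then -1 else (0::'k))" for k
  have "(\<Sum>k\<in>I. c k *s e k) = (\<Sum>k\<in>I. (if k = i then e i else 0) - (if k = j then e j else 0))"
    using ij(4) by (intro sum.cong) (auto simp: c_def)
  also have "\<dots> = 0"
    using ij assms(3) by (simp add: sum_subtractf)
  finally have "c i = 0"
    using ind ij(1) \<open>0 \<in> Z\<close> unfolding independent_modulo_def by metis
  then show False by (simp add: c_def)
qed

lemma independent_modulo_image:
  assumes "independent_modulo Z e I" "inj_on e I"
  shows "independent_modulo Z id (e ` I)"
  unfolding independent_modulo_def
proof (intro allI impI)
  fix c assume "(\<Sum>v\<in>e ` I. c v *s id v) \<in> Z"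
  then have "(\<Sum>i\<in>I. c (e i) *s e i) \<in> Z"
    by (simp add: sum.reindex[OF assms(2)])
  then show "\<forall>v\<in>e ` I. c v = 0"
    using assms(1) unfolding independent_modulo_def by (elim allE[of _ "c \<circ> e"]) auto
qed

lemma independent_modulo_span_Int:
  assumes ind: "independent_modulo Z id Y" and "0 \<in> Z" "finite Y"
  shows "vec.independent Y" and "vec.span Y \<inter> Z \<subseteq> {0}"
proof -
  show "vec.independent Y"
    using assms unfolding vec.independent_explicit independent_modulo_def by auto
  show "vec.span Y \<inter> Z \<subseteq> {0}"
  proof
    fix v assume v: "v \<in> vec.span Y \<inter> Z"
    then obtain u where u: "v = (\<Sum>w\<in>Y. u w *s w)"
      using vec.span_finite[OF \<open>finite Y\<close>] by auto
    with v ind have "\<forall>w\<in>Y. u w = 0"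
      unfolding independent_modulo_def by auto
    with u show "v \<in> {0}" by simp
  qed
qed

lemma dim_Int_add_card_le:
  fixes T Z :: "('k::field ^ 'm) set"
  assumes T: "vec.subspace T" and Z: "vec.subspace Z"
    and I: "finite I" and eT: "e ` I \<subseteq> T" and ind: "independent_modulo Z e I"
  shows "vec.dim (T \<inter> Z) + card I \<le> vec.dim T"
proof -
  have inj: "inj_on e I"
    using independent_modulo_inj_on[OF ind vec.subspace_0[OF Z] I] .
  let ?E = "e ` I"
  have indE: "vec.independent ?E" and disj: "vec.span ?E \<inter> Z \<subseteq> {0}"
    using independent_modulo_span_Int[OF independent_modulo_image[OF ind inj]] vec.subspace_0[OF Z] I
    by auto
  have "vec.span ?E \<inter> (T \<inter> Z) \<subseteq> {0}"
    using disj by blast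
  then have "vec.dim (vec.span ?E \<inter> (T \<inter> Z)) = 0"
    by (metis vec.dim_empty vec.dim_singleton subset_singletonD)
  moreover have "vec.dim {x + y |x y. x \<in> vec.span ?E \<and> y \<in> T \<inter> Z} + vec.dim (vec.span ?E \<inter> (T \<inter> Z))
      = vec.dim (vec.span ?E) + vec.dim (T \<inter> Z)"
    using vec.dim_sums_Int[OF vec.subspace_span vec.subspace_inter[OF T Z]] .
  moreover have "vec.dim (vec.span ?E) = card I"
    using vec.dim_span_eq_card_independent[OF indE] card_image[OF inj] by simp
  moreover have "{x + y |x y. x \<in> vec.span ?E \<and> y \<in> T \<inter> Z} \<subseteq> T"
    using vec.span_minimal[OF eT T] T by (auto intro: vec.subspace_add)
  then have "vec.dim {x + y |x y. x \<in> vec.span ?E \<and> y \<in> T \<inter> Z} \<le> vec.dim T"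
    by (rule vec.dim_subset)
  ultimately show ?thesis by linarith
qed

lemma independent_modulo_span_diff:
  assumes ind: "vec.independent B" and AB: "A \<subseteq> B"
  shows "independent_modulo (vec.span A) id (B - A)"
  unfolding independent_modulo_def
proof (intro allI impI)
  fix c assume "(\<Sum>y\<in>B - A. c y *s id y) \<in> vec.span A"
  have fB: "finite B" using ind vec.independent_bound_general by blast
  then have fA: "finite A" using AB finite_subset by blast
  obtain d where d: "(\<Sum>y\<in>B - A. c y *s y) = (\<Sum>v\<in>A. d v *s v)"
    using \<open>(\<Sum>y\<in>B - A. c y *s id y) \<in> vec.span A\<close> vec.span_finite[OF fA] by auto
  define c' where "c' y = (if y \<in> A then - d y else c y)" for y
  have "(\<Sum>y\<in>B. c' y *s y) = (\<Sum>y\<in>A. c' y *s y) + (\<Sum>y\<in>B - A. c' y *s y)"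
    using sum.subset_diff[OF AB fB, of "\<lambda>y. c' y *s y"] by (simp add: add.commute)
  also have "\<dots> = - (\<Sum>v\<in>A. d v *s v) + (\<Sum>y\<in>B - A. c y *s y)"
    by (simp add: c'_def sum_negf[symmetric])
  finally have "(\<Sum>y\<in>B. c' y *s y) = 0"
    using d by simp
  then have "\<forall>y\<in>B. c' y = 0"
    using ind unfolding vec.independent_explicit by blast
  then show "\<forall>y\<in>B - A. c y = 0"
    by (force simp: c'_def)
qed

definition elem_fmat :: "('k::field ^ 'n) set \<Rightarrow> 'k ^ 'n \<Rightarrow> 'k ^ 'n \<Rightarrow> ('k, 'n) fmat" where
  "elem_fmat B x y = fmat_of (matrix (vec.construct B (\<lambda>b. if b = x then y else 0)))"

lemma fmat_apply_elem_fmat: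
  assumes "vec.independent B"
  shows "fmat_apply (elem_fmat B x y) v = vec.construct B (\<lambda>b. if b = x then y else 0) v"
  using matrix_works[OF vec.linear_construct[OF assms]] by (simp add: elem_fmat_def)

lemma fmat_apply_elem_fmat_basis:
  assumes "vec.independent B" "b \<in> B"
  shows "fmat_apply (elem_fmat B x y) b = (if b = x then y else 0)"
  unfolding fmat_apply_elem_fmat[OF assms(1)] vec.construct_basis[OF assms] by simp

lemma fmat_apply_elem_fmat_vanishes:
  assumes B: "vec.independent B" and "C \<subseteq> B" "x \<notin> C" and u: "u \<in> vec.span C"
  shows "fmat_apply (elem_fmat B x y) u = 0"
proof -
  have "fmat_apply (elem_fmat B x y) b = 0" if "b \<in> C" for b
    using that assms(2,3) fmat_apply_elem_fmat_basis[OF B] by auto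
  then show ?thesis
    using vec.linear_eq_0_on_span[OF linear_fmat_apply _ u] by blast
qed

lemma fmat_apply_elem_fmat_in_subspace:
  assumes B: "vec.independent B" and D: "vec.subspace D" and "y \<in> D"
  shows "fmat_apply (elem_fmat B x y) v \<in> D"
proof -
  have "fmat_apply (elem_fmat B x y) v \<in> vec.span ((\<lambda>b. if b = x then y else 0) ` B)"
    unfolding fmat_apply_elem_fmat[OF B] by (rule vec.construct_in_span[OF B])
  moreover have "vec.span ((\<lambda>b. if b = x then y else 0) ` B) \<subseteq> D"
    using assms vec.subspace_0[OF D] by (intro vec.span_minimal) auto
  ultimately show ?thesis by blast
qed

lemma fmat_apply_sum_elem_fmats:
  assumes B: "vec.independent B" and "x \<in> B" "x \<in> X" "finite X" "finite Y"
  shows "fmat_apply (\<Sum>p\<in>X \<times> Y. c p *s elem_fmat B (fst p) (snd p)) x = (\<Sum>y\<in>Y. c (x, y) *s y)"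
proof -
  have "fmat_apply (\<Sum>p\<in>X \<times> Y. c p *s elem_fmat B (fst p) (snd p)) x
      = (\<Sum>x'\<in>X. \<Sum>y\<in>Y. c (x', y) *s (if x = x' then y else 0))"
    using assms by (simp add: fmat_apply_sum fmat_apply_elem_fmat_basis sum.cartesian_product split_def)
  also have "\<dots> = (\<Sum>x'\<in>X. if x = x' then (\<Sum>y\<in>Y. c (x', y) *s y) else 0)"
    by (rule sum.cong) auto
  also have "\<dots> = (\<Sum>y\<in>Y. c (x, y) *s y)"
    using assms by simp
  finally show ?thesis .
qed

lemma dim_Int_add_elem_fmats_le:
  fixes T Z :: "('k::field, 'n::finite) fmat set" and S :: "('k ^ 'n) set"
  assumes T: "vec.subspace T" and Z: "vec.subspace Z"
    and B: "vec.independent B" and X: "X \<subseteq> B" "finite X" and Y: "finite Y"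
    and in_T: "\<And>x y. x \<in> X \<Longrightarrow> y \<in> Y \<Longrightarrow> elem_fmat B x y \<in> T"
    and Z_S: "\<And>A x. A \<in> Z \<Longrightarrow> x \<in> X \<Longrightarrow> fmat_apply A x \<in> S"
    and Y_S: "independent_modulo S id Y"
  shows "vec.dim (T \<inter> Z) + card X * card Y \<le> vec.dim T"
proof -
  let ?e = "\<lambda>p. elem_fmat B (fst p) (snd p)"
  have ind: "independent_modulo Z ?e (X \<times> Y)"
    unfolding independent_modulo_def
  proof (intro allI impI ballI)
    fix c p assume sum_Z: "(\<Sum>p\<in>X \<times> Y. c p *s ?e p) \<in> Z" and "p \<in> X \<times> Y"
    then obtain x y where p: "p = (x, y)" "x \<in> X" "y \<in> Y" by blast
    have "fmat_apply (\<Sum>p\<in>X \<times> Y. c p *s ?e p) x \<in> S"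
      using Z_S[OF sum_Z p(2)] .
    then have "(\<Sum>y\<in>Y. c (x, y) *s y) \<in> S"
      using fmat_apply_sum_elem_fmats[OF B _ p(2) X(2) Y] X(1) p(2) by auto
    then have "\<forall>y\<in>Y. c (x, y) = 0"
      using Y_S unfolding independent_modulo_def by (elim allE[of _ "\<lambda>y. c (x, y)"]) auto
    with p show "c p = 0" by auto
  qed
  have "?e ` (X \<times> Y) \<subseteq> T"
    using in_T by auto
  with ind have "vec.dim (T \<inter> Z) + card (X \<times> Y) \<le> vec.dim T"
    by (intro dim_Int_add_card_le[OF T Z]) (simp_all add: X(2) Y)
  then show ?thesis by (simp add: card_cartesian_product)
qed

lemma obtain_complement_independent_modulo:
  fixes D W :: "('k::field ^ 'n) set"
  assumes D: "vec.subspace D"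
  obtains Y where "Y \<subseteq> D" "finite Y" "card Y = vec.dim D - vec.dim (D \<inter> W)"
    "independent_modulo W id Y"
proof -
  obtain B0 where B0: "B0 \<subseteq> D \<inter> W" "vec.independent B0" "D \<inter> W \<subseteq> vec.span B0"
    "card B0 = vec.dim (D \<inter> W)"
    using vec.basis_exists by blast
  obtain C where C: "B0 \<subseteq> C" "C \<subseteq> D" "vec.independent C" "D \<subseteq> vec.span C"
    using vec.maximal_independent_subset_extend[of B0 D] B0(1,2) by blast
  have fin: "finite C"
    using C(3) vec.independent_bound_general by blast
  have card: "card C = vec.dim D"
    using vec.basis_card_eq_dim[OF C(2) C(4) C(3)] .
  have "independent_modulo W id (C - B0)"
    unfolding independent_modulo_def
  proof (intro allI impI)
    fix c assume "(\<Sum>y\<in>C - B0. c y *s id y) \<in> W"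
    moreover have "(\<Sum>y\<in>C - B0. c y *s y) \<in> D"
      using C(2) by (intro vec.subspace_sum[OF D] vec.subspace_scale[OF D]) auto
    ultimately have "(\<Sum>y\<in>C - B0. c y *s id y) \<in> vec.span B0"
      using B0(3) by auto
    then show "\<forall>y\<in>C - B0. c y = 0"
      using independent_modulo_span_diff[OF C(3,1)] unfolding independent_modulo_def by blast
  qed
  moreover have "card (C - B0) = vec.dim D - vec.dim (D \<inter> W)"
    using fin card C(1) B0(4) by (simp add: card_Diff_subset finite_subset)
  ultimately show ?thesis
    using that[of "C - B0"] C(2) fin by blast
qed

lemma obtain_elem_fmats_vanishing:
  fixes U W :: "('k::field ^ 'n) set"
  obtains B X where "vec.independent B" "X \<subseteq> B" "X \<subseteq> W" "finite X"
    "card X = vec.dim (U \<union> W) - vec.dim U"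
    "\<And>x y u. x \<in> X \<Longrightarrow> u \<in> U \<Longrightarrow> fmat_apply (elem_fmat B x y) u = 0"
proof -
  obtain BU where BU: "BU \<subseteq> U" "vec.independent BU" "U \<subseteq> vec.span BU" "card BU = vec.dim U"
    using vec.basis_exists by blast
  obtain C where C: "BU \<subseteq> C" "C \<subseteq> BU \<union> W" "vec.independent C" "BU \<union> W \<subseteq> vec.span C"
    using vec.maximal_independent_subset_extend[of BU "BU \<union> W"] BU(2) by blast
  obtain B where B: "C \<subseteq> B" "vec.independent B"
    using vec.maximal_independent_subset_extend[of C UNIV] C(3) by blast
  have "U \<union> W \<subseteq> vec.span C"
    using vec.span_mono[OF C(1)] BU(3) C(4) by blast
  then have card: "card C = vec.dim (U \<union> W)"
    using vec.basis_card_eq_dim[OF _ _ C(3)] C(2) BU(1) by blast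
  have fin: "finite C"
    using C(3) vec.independent_bound_general by blast
  have "fmat_apply (elem_fmat B x y) u = 0" if "x \<in> C - BU" "u \<in> U" for x y u
    using fmat_apply_elem_fmat_vanishes[OF B(2), of BU x u y] that B(1) C(1) BU(3) by blast
  moreover have "card (C - BU) = vec.dim (U \<union> W) - vec.dim U"
    using fin card C(1) BU(4) by (simp add: card_Diff_subset finite_subset)
  moreover have "C - BU \<subseteq> W"
    using C(2) by blast
  ultimately show ?thesis
    using that[of B "C - BU"] B fin by blast
qed

lemma dim_invariant_fmats_insert_join:
  fixes F :: "('k::field ^ 'n::finite) set set"
  assumes F: "\<And>V. V \<in> F \<Longrightarrow> vec.subspace V" and W: "vec.subspace W"
  shows "vec.dim (invariant_fmats (insert W F))
      + (CARD('n) - vec.dim W) * (vec.dim (\<Union>(insert W F)) - vec.dim (\<Union>F))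
    \<le> vec.dim (invariant_fmats F)"
proof -
  obtain B X where X: "vec.independent B" "X \<subseteq> B" "X \<subseteq> W" "finite X"
      "card X = vec.dim (\<Union>F \<union> W) - vec.dim (\<Union>F)"
    and vanish: "\<And>x y u. x \<in> X \<Longrightarrow> u \<in> \<Union>F \<Longrightarrow> fmat_apply (elem_fmat B x y) u = 0"
    using obtain_elem_fmats_vanishing[where U = "\<Union>F" and W = W] by blast
  obtain Y where Y: "finite Y" "card Y = vec.dim (UNIV :: ('k ^ 'n) set) - vec.dim (UNIV \<inter> W)"
      "independent_modulo W id Y"
    using obtain_complement_independent_modulo[OF vec.subspace_UNIV, where W = W] by blast
  have "vec.dim (invariant_fmats F \<inter> invariant_fmats {W}) + card X * card Y
      \<le> vec.dim (invariant_fmats F)"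
  proof (rule dim_Int_add_elem_fmats_le[OF _ _ X(1,2,4) Y(1) _ _ Y(3)])
    show "vec.subspace (invariant_fmats F)" "vec.subspace (invariant_fmats {W})"
      using F W by (auto intro: subspace_invariant_fmats)
    show "elem_fmat B x y \<in> invariant_fmats F" if x: "x \<in> X" for x y
    proof -
      have "fmat_apply (elem_fmat B x y) v \<in> V" if "V \<in> F" "v \<in> V" for V v
      proof -
        have "fmat_apply (elem_fmat B x y) v = 0"
          using vanish[OF x, of v y] that by blast
        then show ?thesis
          using vec.subspace_0[OF F[OF that(1)]] by simp
      qed
      then show ?thesis by (simp add: invariant_fmats_def)
    qed
    show "fmat_apply A x \<in> W" if "A \<in> invariant_fmats {W}" "x \<in> X" for A x
      using that X(3) by (auto simp: invariant_fmats_def)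
  qed
  moreover have "card Y = CARD('n) - vec.dim W"
    using Y(2) by (simp only: Int_UNIV_left vec_dim_card)
  moreover have "\<Union>F \<union> W = \<Union>(insert W F)"
    by blast
  ultimately show ?thesis
    using X(5) invariant_fmats_insert[of W F] by (simp add: mult.commute)
qed

lemma dim_invariant_fmats_insert_meet:
  fixes F :: "('k::field ^ 'n::finite) set set"
  assumes F: "\<And>V. V \<in> F \<Longrightarrow> vec.subspace V" and W: "vec.subspace W"
  shows "vec.dim (invariant_fmats (insert W F))
      + vec.dim W * (vec.dim (\<Inter>F) - vec.dim (\<Inter>(insert W F)))
    \<le> vec.dim (invariant_fmats F)"
proof -
  have D: "vec.subspace (\<Inter>F)"
    using F by (simp add: vec.subspace_Inter)
  obtain B X where X: "vec.independent B" "X \<subseteq> B" "X \<subseteq> W" "finite X" "card X = vec.dim W"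
    using obtain_elem_fmats_vanishing[where U = "{}" and W = W] by (metis Un_empty_left diff_zero vec.dim_empty)
  obtain Y where Y: "Y \<subseteq> \<Inter>F" "finite Y" "card Y = vec.dim (\<Inter>F) - vec.dim (\<Inter>F \<inter> W)"
      "independent_modulo W id Y"
    using obtain_complement_independent_modulo[OF D, where W = W] by blast
  have "vec.dim (invariant_fmats F \<inter> invariant_fmats {W}) + card X * card Y
      \<le> vec.dim (invariant_fmats F)"
  proof (rule dim_Int_add_elem_fmats_le[OF _ _ X(1,2,4) Y(2) _ _ Y(4)])
    show "vec.subspace (invariant_fmats F)" "vec.subspace (invariant_fmats {W})"
      using F W by (auto intro: subspace_invariant_fmats)
    show "elem_fmat B x y \<in> invariant_fmats F" if "y \<in> Y" for x y
      unfolding invariant_fmats_def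
      using fmat_apply_elem_fmat_in_subspace[OF X(1) D] that Y(1) by blast
    show "fmat_apply A x \<in> W" if "A \<in> invariant_fmats {W}" "x \<in> X" for A x
      using that X(3) by (auto simp: invariant_fmats_def)
  qed
  moreover have "\<Inter>F \<inter> W = \<Inter>(insert W F)"
    by blast
  ultimately show ?thesis
    using X(5) Y(3) invariant_fmats_insert[of W F] by simp
qed

lemma subspace_fmats_vanishing: "vec.subspace {A :: ('k::field, 'n::finite) fmat. \<forall>u\<in>U. fmat_apply A u = 0}"
  unfolding vec.subspace_def by simp

lemma subspace_fmats_into:
  assumes "vec.subspace D"
  shows "vec.subspace {A :: ('k::field, 'n::finite) fmat. \<forall>x. fmat_apply A x \<in> D}"
  using assms unfolding vec.subspace_def by simp

lemma dim_fmats_vanishing_ge: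
  fixes U :: "('k::field ^ 'n::finite) set"
  shows "CARD('n) * (CARD('n) - vec.dim U) \<le> vec.dim {A :: ('k, 'n) fmat. \<forall>u\<in>U. fmat_apply A u = 0}"
proof -
  obtain B X where X: "vec.independent B" "X \<subseteq> B" "finite X" "card X = CARD('n) - vec.dim U"
    and vanish: "\<And>x y u. x \<in> X \<Longrightarrow> u \<in> U \<Longrightarrow> fmat_apply (elem_fmat B x y) u = 0"
    using obtain_elem_fmats_vanishing[where U = U and W = UNIV] by (auto simp: card_cart_basis)
  obtain Y :: "('k ^ 'n) set" where Y: "finite Y"
      "card Y = vec.dim (UNIV :: ('k ^ 'n) set) - vec.dim (UNIV \<inter> {0 :: 'k ^ 'n})"
      "independent_modulo {0} id Y"
    by (rule obtain_complement_independent_modulo[OF vec.subspace_UNIV, where W = "{0}"])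
  have "vec.dim ({A. \<forall>u\<in>U. fmat_apply A u = 0} \<inter> {0}) + card X * card Y
      \<le> vec.dim {A :: ('k, 'n) fmat. \<forall>u\<in>U. fmat_apply A u = 0}"
    by (rule dim_Int_add_elem_fmats_le[OF subspace_fmats_vanishing _ X(1,2,3) Y(1) _ _ Y(3)])
      (auto simp: vec.subspace_def vanish)
  then show ?thesis
    using X(4) Y(2) by (simp add: card_cart_basis mult.commute)
qed

lemma dim_fmats_into_ge:
  fixes D :: "('k::field ^ 'n::finite) set"
  assumes D: "vec.subspace D"
  shows "CARD('n) * vec.dim D \<le> vec.dim {A :: ('k, 'n) fmat. \<forall>x. fmat_apply A x \<in> D}"
proof -
  obtain B X :: "('k ^ 'n) set" where X: "vec.independent B" "X \<subseteq> B" "finite X" "card X = CARD('n)"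
    using obtain_elem_fmats_vanishing[where U = "{}" and W = "UNIV :: ('k ^ 'n) set"]
    by (auto simp: card_cart_basis)
  obtain Y where Y: "Y \<subseteq> D" "finite Y" "card Y = vec.dim D - vec.dim (D \<inter> {0})"
      "independent_modulo {0} id Y"
    by (rule obtain_complement_independent_modulo[OF D, where W = "{0}"])
  have "vec.dim ({A. \<forall>x. fmat_apply A x \<in> D} \<inter> {0}) + card X * card Y
      \<le> vec.dim {A :: ('k, 'n) fmat. \<forall>x. fmat_apply A x \<in> D}"
    by (rule dim_Int_add_elem_fmats_le[OF subspace_fmats_into[OF D] _ X(1,2,3) Y(2) _ _ Y(4)])
      (use Y(1) fmat_apply_elem_fmat_in_subspace[OF X(1) D] in \<open>auto simp: vec.subspace_def\<close>)
  moreover have "D \<inter> {0} = {0}"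
    using vec.subspace_0[OF D] by blast
  ultimately show ?thesis
    using X(4) Y(3) by simp
qed

lemma card_add_potential_le:
  fixes f g :: "'a set \<Rightarrow> nat"
  assumes "finite L"
    and step: "\<And>F W. F \<subseteq> L \<Longrightarrow> W \<in> L \<Longrightarrow> W \<notin> F \<Longrightarrow>
      g F \<le> g (insert W F) \<and> f (insert W F) + 1 + c * (g (insert W F) - g F) \<le> f F"
  shows "card L + f L + c * g L \<le> f {} + c * g {}"
proof -
  have "card F + f F + c * g F \<le> f {} + c * g {}" if "finite F" "F \<subseteq> L" for F
    using that
  proof (induction F rule: finite_induct)
    case empty
    then show ?case by simp
  next
    case (insert W F)
    then have "g F \<le> g (insert W F)"
      and less: "f (insert W F) + 1 + c * (g (insert W F) - g F) \<le> f F"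
      using step[of F W] by auto
    then obtain d where "g (insert W F) = g F + d"
      using le_Suc_ex by blast
    then show ?case
      using insert less by (simp add: add_mult_distrib2)
  qed
  then show ?thesis
    using assms(1) by blast
qed

lemma add_one_add_mult_le:
  fixes a b k d :: nat
  assumes "a + k * d \<le> b" "a < b"
  shows "a + 1 + (k - 1) * d \<le> b"
proof (cases "k = 0 \<or> d = 0")
  case True
  then show ?thesis using assms by auto
next
  case False
  then have "1 + (k - 1) * d \<le> k * d"
    by (cases k) auto
  then show ?thesis using assms(1) by linarith
qed

definition irredundant :: "('k::field ^ 'n) set set \<Rightarrow> bool" where
  "irredundant L \<longleftrightarrow>
    (\<forall>F W. F \<subseteq> L \<longrightarrow> W \<in> L \<longrightarrow> W \<notin> F \<longrightarrow> invariant_fmats (insert W F) \<noteq> invariant_fmats F)"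

lemma dim_invariant_fmats_insert_less:
  fixes L :: "('k::field ^ 'n::finite) set set"
  assumes "irredundant L" "F \<subseteq> L" "W \<in> L" "W \<notin> F" and L: "\<And>V. V \<in> L \<Longrightarrow> vec.subspace V"
  shows "vec.dim (invariant_fmats (insert W F)) < vec.dim (invariant_fmats F)"
proof (rule subspace_dim_less)
  show "vec.subspace (invariant_fmats (insert W F))" "vec.subspace (invariant_fmats F)"
    using assms by (auto intro!: subspace_invariant_fmats)
  show "invariant_fmats (insert W F) \<subset> invariant_fmats F"
    using assms(1-4) invariant_fmats_insert[of W F] unfolding irredundant_def by blast
qed

lemma card_irredundant_join_potential:
  fixes L :: "('k::field ^ 'n::finite) set set"
  assumes L: "finite L" "irredundant L" and dims: "\<And>W. W \<in> L \<Longrightarrow> vec.subspace W \<and> vec.dim W = m"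
  shows "card L + vec.dim (invariant_fmats L) + (CARD('n) - m - 1) * vec.dim (\<Union>L)
    \<le> CARD('n) * CARD('n)"
proof -
  have "card L + vec.dim (invariant_fmats L) + (CARD('n) - m - 1) * vec.dim (\<Union>L)
      \<le> vec.dim (invariant_fmats {} :: ('k, 'n) fmat set) + (CARD('n) - m - 1) * vec.dim (\<Union>{} :: ('k ^ 'n) set)"
  proof (rule card_add_potential_le[OF L(1)])
    fix F W assume FW: "F \<subseteq> L" "W \<in> L" "W \<notin> F"
    have "vec.dim (invariant_fmats (insert W F))
        + (CARD('n) - m) * (vec.dim (\<Union>(insert W F)) - vec.dim (\<Union>F))
      \<le> vec.dim (invariant_fmats F)"
      using dim_invariant_fmats_insert_join[of F W] dims FW by auto
    moreover have "vec.dim (invariant_fmats (insert W F)) < vec.dim (invariant_fmats F)"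
      using dim_invariant_fmats_insert_less[OF L(2) FW] dims by blast
    ultimately have "vec.dim (invariant_fmats (insert W F)) + 1
        + (CARD('n) - m - 1) * (vec.dim (\<Union>(insert W F)) - vec.dim (\<Union>F))
      \<le> vec.dim (invariant_fmats F)"
      by (rule add_one_add_mult_le)
    moreover have "vec.dim (\<Union>F) \<le> vec.dim (\<Union>(insert W F))"
      by (rule vec.dim_subset) auto
    ultimately show "vec.dim (\<Union>F) \<le> vec.dim (\<Union>(insert W F))
        \<and> vec.dim (invariant_fmats (insert W F)) + 1
          + (CARD('n) - m - 1) * (vec.dim (\<Union>(insert W F)) - vec.dim (\<Union>F))
        \<le> vec.dim (invariant_fmats F)"
      by blast
  qed
  then show ?thesis
    by (simp add: card_cart_basis)
qed

lemma card_irredundant_meet_potential: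
  fixes L :: "('k::field ^ 'n::finite) set set"
  assumes L: "finite L" "irredundant L" and dims: "\<And>W. W \<in> L \<Longrightarrow> vec.subspace W \<and> vec.dim W = m"
  shows "card L + vec.dim (invariant_fmats L) + (m - 1) * (CARD('n) - vec.dim (\<Inter>L))
    \<le> CARD('n) * CARD('n)"
proof -
  have "card L + vec.dim (invariant_fmats L) + (m - 1) * (CARD('n) - vec.dim (\<Inter>L))
      \<le> vec.dim (invariant_fmats {} :: ('k, 'n) fmat set)
        + (m - 1) * (CARD('n) - vec.dim (\<Inter>{} :: ('k ^ 'n) set))"
  proof (rule card_add_potential_le[OF L(1)])
    fix F W assume FW: "F \<subseteq> L" "W \<in> L" "W \<notin> F"
    have "vec.dim (invariant_fmats (insert W F))
        + m * (vec.dim (\<Inter>F) - vec.dim (\<Inter>(insert W F)))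
      \<le> vec.dim (invariant_fmats F)"
      using dim_invariant_fmats_insert_meet[of F W] dims FW by auto
    moreover have "vec.dim (invariant_fmats (insert W F)) < vec.dim (invariant_fmats F)"
      using dim_invariant_fmats_insert_less[OF L(2) FW] dims by blast
    moreover have "vec.dim (\<Inter>(insert W F)) \<le> vec.dim (\<Inter>F)"
      by (rule vec.dim_subset) auto
    moreover have "vec.dim (\<Inter>F) \<le> CARD('n)"
      by (rule dim_le_CARD)
    ultimately show "CARD('n) - vec.dim (\<Inter>F) \<le> CARD('n) - vec.dim (\<Inter>(insert W F))
        \<and> vec.dim (invariant_fmats (insert W F)) + 1
          + (m - 1) * ((CARD('n) - vec.dim (\<Inter>(insert W F))) - (CARD('n) - vec.dim (\<Inter>F)))
        \<le> vec.dim (invariant_fmats F)"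
      using add_one_add_mult_le by simp
  qed
  then show ?thesis
    by (simp add: card_cart_basis)
qed

lemma dim_less_dim_invariant_fmats:
  fixes K :: "('k::field, 'n::finite) fmat set"
  assumes "vec.subspace K" "K \<subseteq> invariant_fmats L" "fmat_of (mat 1) \<notin> K"
    and "\<And>W. W \<in> L \<Longrightarrow> vec.subspace W"
  shows "vec.dim K < vec.dim (invariant_fmats L)"
proof (rule subspace_dim_less)
  have "fmat_of (mat 1) \<in> invariant_fmats L"
    by (simp add: invariant_fmats_def)
  then show "K \<subset> invariant_fmats L"
    using assms(2,3) by blast
qed (use assms in \<open>auto intro: subspace_invariant_fmats\<close>)

lemma le_diff_mult_if_add_mult_le:
  fixes h n e a :: nat
  assumes "h + n * (n - e) + a * e \<le> n * n" "e \<le> n" "a \<le> n"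
  shows "h \<le> (n - a) * n"
proof -
  have "n * (n - e) + n * e = n * n"
    using assms(2) by (simp flip: add_mult_distrib2)
  moreover have "(n - a) * e + a * e = n * e"
    using assms(3) by (simp flip: add_mult_distrib)
  moreover have "(n - a) * e \<le> (n - a) * n"
    using assms(2) by (rule mult_le_mono2)
  ultimately show ?thesis
    using assms(1) by linarith
qed

lemma card_irredundant_le_join:
  fixes L :: "('k::field ^ 'n::finite) set set"
  assumes L: "finite L" "irredundant L" and dims: "\<And>W. W \<in> L \<Longrightarrow> vec.subspace W \<and> vec.dim W = m"
    and m: "1 \<le> m" "m < CARD('n)"
  shows "card L + 1 \<le> (m + 1) * CARD('n)"
proof (cases "L = {}")
  case True
  then show ?thesis using m by simp
next
  case False
  then obtain W0 where W0: "W0 \<in> L" by blast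
  have "\<not> W0 \<subseteq> {0}"
  proof
    assume "W0 \<subseteq> {0}"
    then have "vec.dim W0 \<le> vec.dim {0 :: 'k ^ 'n}" by (rule vec.dim_subset)
    then show False using dims[OF W0] m(1) by simp
  qed
  then obtain x0 where x0: "x0 \<in> W0" "x0 \<noteq> 0" by blast
  define u where "u = vec.dim (\<Union>L)"
  let ?n = "CARD('n)" and ?K = "{A :: ('k, 'n) fmat. \<forall>x\<in>\<Union>L. fmat_apply A x = 0}"
  have "vec.dim ?K < vec.dim (invariant_fmats L)"
  proof (rule dim_less_dim_invariant_fmats[OF subspace_fmats_vanishing])
    show "?K \<subseteq> invariant_fmats L"
      using dims vec.subspace_0 by (fastforce simp: invariant_fmats_def)
    show "fmat_of (mat 1) \<notin> ?K"
      using x0 W0 by auto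
  qed (use dims in blast)
  moreover have "?n * (?n - u) \<le> vec.dim ?K"
    unfolding u_def by (rule dim_fmats_vanishing_ge)
  moreover have "card L + vec.dim (invariant_fmats L) + (?n - m - 1) * u \<le> ?n * ?n"
    unfolding u_def by (rule card_irredundant_join_potential[OF L dims])
  ultimately have "card L + 1 + ?n * (?n - u) + (?n - m - 1) * u \<le> ?n * ?n"
    by linarith
  then have "card L + 1 \<le> (?n - (?n - m - 1)) * ?n"
    by (rule le_diff_mult_if_add_mult_le) (simp_all add: u_def dim_le_CARD)
  then show ?thesis
    using m by simp
qed

lemma card_irredundant_le_meet:
  fixes L :: "('k::field ^ 'n::finite) set set"
  assumes L: "finite L" "irredundant L" and dims: "\<And>W. W \<in> L \<Longrightarrow> vec.subspace W \<and> vec.dim W = m"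
    and m: "1 \<le> m" "m < CARD('n)"
  shows "card L + 1 \<le> (CARD('n) - m + 1) * CARD('n)"
proof (cases "L = {}")
  case True
  then show ?thesis using m by simp
next
  case False
  then obtain W0 where W0: "W0 \<in> L" by blast
  have "W0 \<noteq> UNIV"
    using dims[OF W0] m(2) by (auto simp: card_cart_basis)
  then obtain y0 where y0: "y0 \<notin> W0" by blast
  define d where "d = vec.dim (\<Inter>L)"
  let ?n = "CARD('n)" and ?K = "{A :: ('k, 'n) fmat. \<forall>x. fmat_apply A x \<in> \<Inter>L}"
  have D: "vec.subspace (\<Inter>L)"
    using dims by (simp add: vec.subspace_Inter)
  have "vec.dim ?K < vec.dim (invariant_fmats L)"
  proof (rule dim_less_dim_invariant_fmats[OF subspace_fmats_into[OF D]])
    show "?K \<subseteq> invariant_fmats L"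
      by (auto simp: invariant_fmats_def)
    show "fmat_of (mat 1) \<notin> ?K"
      using y0 W0 by auto
  qed (use dims in blast)
  moreover have "?n * d \<le> vec.dim ?K"
    unfolding d_def by (rule dim_fmats_into_ge[OF D])
  moreover have "card L + vec.dim (invariant_fmats L) + (m - 1) * (?n - d) \<le> ?n * ?n"
    unfolding d_def by (rule card_irredundant_meet_potential[OF L dims])
  ultimately have "card L + 1 + ?n * d + (m - 1) * (?n - d) \<le> ?n * ?n"
    by linarith
  moreover have "?n - (?n - d) = d"
    unfolding d_def by (simp add: dim_le_CARD)
  ultimately have "card L + 1 + ?n * (?n - (?n - d)) + (m - 1) * (?n - d) \<le> ?n * ?n"
    by simp
  then have "card L + 1 \<le> (?n - (m - 1)) * ?n"
    by (rule le_diff_mult_if_add_mult_le) (use m in simp_all)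
  then show ?thesis
    using m by (simp add: Suc_diff_le less_imp_le)
qed

lemma induced_perm_eq_if_image_subset:
  fixes A :: "'k::field ^ 'n ^ 'n"
  assumes A: "invertible A" and W: "W \<in> subspaces_of_dim m" and sub: "(\<lambda>v. A *v v) ` W \<subseteq> W"
  shows "induced_perm m A W = W"
proof -
  have W_sub: "vec.subspace W"
    using W by (simp add: subspaces_of_dim_def)
  have "vec.dim ((\<lambda>v. A *v v) ` W) = vec.dim W"
    using inj_on_subset[OF inj_matrix_vector_mult[OF A]]
    by (intro vec.dim_image_eq[OF matrix_vector_mul_linear_gen]) auto
  moreover have "vec.subspace ((\<lambda>v. A *v v) ` W)"
    by (rule vec.linear_subspace_image[OF matrix_vector_mul_linear_gen W_sub])
  ultimately have "(\<lambda>v. A *v v) ` W = W"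
    using vec.subspace_dim_equal[OF _ W_sub sub] by simp
  then show ?thesis
    using W by (simp add: induced_perm_def)
qed

lemma irredundant_if_height_independent:
  fixes G :: "(('k::field ^ 'n::finite) set \<Rightarrow> ('k ^ 'n) set) set"
  assumes G: "G \<subseteq> PGL_perms m" and L: "L \<subseteq> subspaces_of_dim m" and ind: "height_independent G L"
  shows "irredundant L"
  unfolding irredundant_def
proof (intro allI impI)
  fix F W assume F: "F \<subseteq> L" "W \<in> L" "W \<notin> F"
  show "invariant_fmats (insert W F) \<noteq> invariant_fmats F"
  proof
    assume eq: "invariant_fmats (insert W F) = invariant_fmats F"
    have "pointwise_stab G (L - {W}) \<subseteq> pointwise_stab G L"
    proof
      fix g assume g: "g \<in> pointwise_stab G (L - {W})"
      then obtain A where A: "invertible A" "g = induced_perm m A"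
        using G by (auto simp: pointwise_stab_def PGL_perms_def)
      have "(\<lambda>v. A *v v) ` V = V" if V: "V \<in> F" for V
      proof -
        have "g V = V"
          using g V F(1,3) unfolding pointwise_stab_def by blast
        moreover have "V \<in> subspaces_of_dim m"
          using V F(1) L by blast
        ultimately show ?thesis
          using A(2) by (simp add: induced_perm_def)
      qed
      then have "fmat_of A \<in> invariant_fmats (insert W F)"
        unfolding eq by (auto simp: invariant_fmats_def)
      then have "(\<lambda>v. A *v v) ` W \<subseteq> W"
        by (auto simp: invariant_fmats_def)
      then have "g W = W"
        using induced_perm_eq_if_image_subset[OF A(1)] F(2) L A(2) by blast
      with g show "g \<in> pointwise_stab G L"
        by (auto simp: pointwise_stab_def)
    qed
    then have "pointwise_stab G L = pointwise_stab G (L - {W})"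
      by (auto simp: pointwise_stab_def)
    moreover have "L - {W} \<subset> L"
      using F(2) by blast
    ultimately show False
      using ind by (auto simp: height_independent_def)
  qed
qed

lemma height_attained:
  assumes "finite Om"
  obtains L where "L \<subseteq> Om" "height_independent G L" "height G Om = card L"
proof -
  let ?C = "{L. L \<subseteq> Om \<and> height_independent G L}"
  have "finite ?C"
    using assms by simp
  moreover have "{} \<in> ?C"
    by (simp add: height_independent_def)
  ultimately have "Max (card ` ?C) \<in> card ` ?C"
    by (intro Max_in) auto
  then show ?thesis
    using that by (auto simp: height_def)
qed

lemma height_subspaces_of_dim_le:
  fixes G :: "(('k::{field,finite} ^ 'n) set \<Rightarrow> ('k ^ 'n) set) set"
  assumes G: "G \<subseteq> PGL_perms m" and m: "1 \<le> m" "m < CARD('n)"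
  shows "height G (subspaces_of_dim m :: ('k ^ 'n) set set) + 1 \<le> (m + 1) * CARD('n)"
    and "height G (subspaces_of_dim m :: ('k ^ 'n) set set) + 1 \<le> (CARD('n) - m + 1) * CARD('n)"
proof -
  obtain L where L: "L \<subseteq> subspaces_of_dim m" "height_independent G L"
      "height G (subspaces_of_dim m :: ('k ^ 'n) set set) = card L"
    using height_attained[of "subspaces_of_dim m :: ('k ^ 'n) set set" G] by auto
  have "finite L" "irredundant L"
    using L irredundant_if_height_independent[OF G] finite_subset by auto
  moreover have "\<And>W. W \<in> L \<Longrightarrow> vec.subspace W \<and> vec.dim W = m"
    using L(1) by (auto simp: subspaces_of_dim_def)
  ultimately show "height G (subspaces_of_dim m :: ('k ^ 'n) set set) + 1 \<le> (m + 1) * CARD('n)"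
    and "height G (subspaces_of_dim m :: ('k ^ 'n) set set) + 1 \<le> (CARD('n) - m + 1) * CARD('n)"
    unfolding L(3) using m by (blast intro: card_irredundant_le_join card_irredundant_le_meet)+
qed

definition echelon_row :: "'n set \<Rightarrow> ('n \<times> 'n) set \<Rightarrow> 'n \<Rightarrow> 'k::field ^ 'n" where
  "echelon_row I R i = (\<chi> k. if k = i \<or> (k \<notin> I \<and> (i, k) \<in> R) then 1 else 0)"

lemma echelon_row_nth_pivot:
  "i \<in> I \<Longrightarrow> k \<in> I \<Longrightarrow> echelon_row I R i $ k = (if k = i then 1 else 0)"
  by (simp add: echelon_row_def)

lemma echelon_row_nth_free:
  "i \<in> I \<Longrightarrow> k \<notin> I \<Longrightarrow> echelon_row I R i $ k = (if (i, k) \<in> R then 1 else 0)"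
  by (auto simp: echelon_row_def)

lemma echelon_combination_nth:
  assumes "finite I" "k \<in> I"
  shows "(\<Sum>i\<in>I. a i *s echelon_row I R i) $ k = (a k :: 'k::field)"
  using assms by (simp add: sum_component echelon_row_nth_pivot if_distrib[of "(*) _"] cong: if_cong)

lemma inj_on_echelon_row: "inj_on (echelon_row I R :: 'n \<Rightarrow> 'k::field ^ 'n) I"
proof (rule inj_onI)
  fix i j assume "i \<in> I" "j \<in> I" "echelon_row I R i = (echelon_row I R j :: 'k ^ 'n)"
  then have "echelon_row I R i $ i = (echelon_row I R j $ i :: 'k)" by simp
  with \<open>i \<in> I\<close> \<open>j \<in> I\<close> show "i = j"
    by (simp add: echelon_row_nth_pivot split: if_splits)
qed

lemma span_echelon_rows_eq_combination:
  fixes w :: "'k::field ^ 'n"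
  assumes I: "finite I" and w: "w \<in> vec.span (echelon_row I R ` I)"
  shows "w = (\<Sum>k\<in>I. w $ k *s echelon_row I R k)"
proof -
  obtain u where "w = (\<Sum>v\<in>echelon_row I R ` I. u v *s v)"
    using w vec.span_finite[of "echelon_row I R ` I"] I by auto
  then have u: "w = (\<Sum>i\<in>I. u (echelon_row I R i) *s echelon_row I R i)"
    by (simp add: sum.reindex[OF inj_on_echelon_row])
  then have "w $ k = u (echelon_row I R k)" if "k \<in> I" for k
    using echelon_combination_nth[OF I that] by metis
  with u show ?thesis
    by (metis (no_types, lifting) sum.cong)
qed

lemma independent_echelon_rows:
  assumes I: "finite I"
  shows "vec.independent (echelon_row I R ` I :: ('k::field ^ 'n) set)"
  unfolding vec.independent_explicit
proof (intro conjI allI impI ballI)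
  show "finite (echelon_row I R ` I :: ('k ^ 'n) set)"
    using I by simp
  fix c and v :: "'k ^ 'n" assume "(\<Sum>v\<in>echelon_row I R ` I. c v *s v) = (0 :: 'k ^ 'n)" and "v \<in> echelon_row I R ` I"
  then obtain k where k: "k \<in> I" "v = echelon_row I R k"
    and "(\<Sum>i\<in>I. c (echelon_row I R i) *s echelon_row I R i) = (0 :: 'k ^ 'n)"
    by (auto simp: sum.reindex[OF inj_on_echelon_row])
  then show "c v = 0"
    using echelon_combination_nth[OF I k(1), of "\<lambda>i. c (echelon_row I R i)" R] by simp
qed

lemma span_echelon_rows_in_subspaces_of_dim:
  assumes "finite I"
  shows "vec.span (echelon_row I R ` I :: ('k::field ^ 'n) set) \<in> subspaces_of_dim (card I)"
  using vec.dim_span_eq_card_independent[OF independent_echelon_rows[OF assms]]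
  by (simp add: subspaces_of_dim_def card_image[OF inj_on_echelon_row])

lemma inj_on_span_echelon_rows:
  assumes I: "finite I"
  shows "inj_on (\<lambda>R. vec.span (echelon_row I R ` I :: ('k::field ^ 'n) set)) (Pow (I \<times> - I))"
proof (rule inj_onI)
  fix R R' assume R: "R \<in> Pow (I \<times> - I)" and R': "R' \<in> Pow (I \<times> - I)"
    and eq: "vec.span (echelon_row I R ` I :: ('k ^ 'n) set) = vec.span (echelon_row I R' ` I)"
  have rows: "echelon_row I R i = (echelon_row I R' i :: 'k ^ 'n)" if i: "i \<in> I" for i
  proof -
    have "echelon_row I R i \<in> vec.span (echelon_row I R' ` I :: ('k ^ 'n) set)"
      using eq i by (metis imageI vec.span_base)
    then have "echelon_row I R i = (\<Sum>k\<in>I. echelon_row I R i $ k *s (echelon_row I R' k :: 'k ^ 'n))"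
      by (rule span_echelon_rows_eq_combination[OF I])
    also have "\<dots> = (\<Sum>k\<in>I. if k = i then echelon_row I R' k else 0)"
      using i by (intro sum.cong) (simp_all add: echelon_row_nth_pivot)
    finally show ?thesis
      using i I by simp
  qed
  show "R = R'"
  proof (intro set_eqI iffI)
    fix p assume "p \<in> R"
    then obtain i k where "p = (i, k)" "i \<in> I" "k \<notin> I"
      using R by auto
    with rows[of i] \<open>p \<in> R\<close> show "p \<in> R'"
      using echelon_row_nth_free[of i I k R] echelon_row_nth_free[of i I k R']
      by (metis (no_types) one_neq_zero)
  next
    fix p assume "p \<in> R'"
    then obtain i k where "p = (i, k)" "i \<in> I" "k \<notin> I"
      using R' by auto
    with rows[of i] \<open>p \<in> R'\<close> show "p \<in> R"
      using echelon_row_nth_free[of i I k R] echelon_row_nth_free[of i I k R']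
      by (metis (no_types) one_neq_zero)
  qed
qed

lemma card_subspaces_of_dim_ge:
  assumes "m \<le> CARD('n)"
  shows "2 ^ (m * (CARD('n) - m)) \<le> card (subspaces_of_dim m :: ('k::{field,finite} ^ 'n) set set)"
proof -
  obtain I :: "'n set" where I: "card I = m" "finite I"
    using obtain_subset_with_card_n[of m "UNIV :: 'n set"] assms by auto
  let ?S = "\<lambda>R. vec.span (echelon_row I R ` I :: ('k ^ 'n) set)"
  have "card (Pow (I \<times> - I)) = 2 ^ (m * (CARD('n) - m))"
    using I by (simp add: card_Pow card_cartesian_product Compl_eq_Diff_UNIV card_Diff_subset)
  then have "card (?S ` Pow (I \<times> - I)) = 2 ^ (m * (CARD('n) - m))"
    using card_image[OF inj_on_span_echelon_rows[OF I(2)]] by simp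
  moreover have "?S ` Pow (I \<times> - I) \<subseteq> subspaces_of_dim m"
    using span_echelon_rows_in_subspaces_of_dim[OF I(2)] I(1) by blast
  ultimately show ?thesis
    by (metis card_mono finite)
qed

lemma less_bounds_if_add_one_le:
  fixes h a b :: nat
  assumes "h + 1 \<le> (a + 1) * (a + b)" "1 \<le> a" "a \<le> b"
  shows "h < 2 * a * (a + b)" and "h < 4 * (a * b)"
proof -
  have "(a + 1) * (a + b) \<le> 2 * a * (a + b)"
    using assms(2) by (intro mult_le_mono1) simp
  then show "h < 2 * a * (a + b)"
    using assms(1) by linarith
  moreover have "2 * a * (a + b) \<le> 2 * a * (2 * b)"
    using assms(3) by (intro mult_le_mono2) simp
  moreover have "2 * a * (2 * b) = 4 * (a * b)"
    by simp
  ultimately show "h < 4 * (a * b)"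
    by linarith
qed

theorem lemma7p4:
  fixes G :: "(('k::{field,finite} ^ 'n) set \<Rightarrow> ('k ^ 'n) set) set"
    and m :: nat
  assumes n2: "CARD('n) \<ge> 2"
    and m1: "1 \<le> m" and m2: "m \<le> CARD('n) - 1"
    and sub: "G \<subseteq> PGL_perms m"
    and psl: "PSL_perms m \<subseteq> G"
    and comp: "\<forall>g\<in>G. \<forall>h\<in>G. g \<circ> h \<in> G"
    and inv: "\<forall>g\<in>G. \<exists>h\<in>G. h \<circ> g = id \<and> g \<circ> h = id"
    and normal: "\<forall>g\<in>G. \<forall>h\<in>G. h \<circ> g = id \<longrightarrow> (\<forall>s\<in>PSL_perms m. g \<circ> s \<circ> h \<in> PSL_perms m)"
  shows "real (height G (subspaces_of_dim m :: ('k ^ 'n) set set))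
           < 4 * log 2 (real (card (subspaces_of_dim m :: ('k ^ 'n) set set)))
       \<and> height G (subspaces_of_dim m :: ('k ^ 'n) set set) < 2 * min m (CARD('n) - m) * CARD('n)"
proof -
  let ?n = "CARD('n)" and ?\<Omega> = "subspaces_of_dim m :: ('k ^ 'n) set set"
  have m_less: "m < ?n"
    using m2 n2 by linarith
  have join: "height G ?\<Omega> + 1 \<le> (m + 1) * (m + (?n - m))"
    and meet: "height G ?\<Omega> + 1 \<le> (?n - m + 1) * ((?n - m) + m)"
    using height_subspaces_of_dim_le[OF sub m1 m_less] m_less by simp_all
  have bounds: "height G ?\<Omega> < 2 * min m (?n - m) * ?n \<and> height G ?\<Omega> < 4 * (m * (?n - m))"
  proof (cases "m \<le> ?n - m")
    case True
    then show ?thesis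
      using less_bounds_if_add_one_le[OF join m1 True] m_less by (simp add: min_def)
  next
    case False
    then show ?thesis
      using less_bounds_if_add_one_le[OF meet] m_less by (simp add: min_def mult.commute)
  qed
  then have "real (height G ?\<Omega>) < 4 * real (m * (?n - m))"
    by (metis of_nat_less_iff of_nat_mult of_nat_numeral)
  moreover have "real (m * (?n - m)) \<le> log 2 (real (card ?\<Omega>))"
    using m_less by (intro le_log2_of_power card_subspaces_of_dim_ge) simp
  ultimately show ?thesis
    using bounds by auto
qed

end
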